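(* Let $\mathcal C$ be a hereditary class of graphs with infinite VC-dimension. Then $\mathcal C$ contains all bipartite graphs, or $\mathcal C$ contains all co-bipartite graphs, or $\mathcal C$ contains all split graphs.
   Context: A class of graphs is hereditary if it is closed under isomorphism and under taking induced subgraphs. For a graph $G$ and $v\in V(G)$, $N[v]$ is the closed neighbourhood. A set $X\subseteq V(G)$ is shattered if for every $S\subseteq X$ there is a vertex $v$ with $N[v]\cap X=S$; the VC-dimension of $G$ is the largest size of a shattered set; a class has infinite VC-dimension if the VC-dimensions of its members are unbounded. A co-bipartite graph is the complement of a bipartite graph (its vertex set can be partitioned into two cliques). A split graph is a graph whose vertex set can be partitioned into a clique and a stable set. *)

theory Defs
  imports Main
begin

text \<open>Finite simple graphs with vertices drawn from nat: a pair (V, E) where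
  E is a symmetric irreflexive adjacency relation living on V.
  Every finite graph is isomorphic to such a graph.\<close>

type_synonym graph = "nat set \<times> (nat \<Rightarrow> nat \<Rightarrow> bool)"

definition verts :: "graph \<Rightarrow> nat set" where "verts G = fst G"
definition adj :: "graph \<Rightarrow> nat \<Rightarrow> nat \<Rightarrow> bool" where "adj G = snd G"

definition wf_graph :: "graph \<Rightarrow> bool" where
  "wf_graph G \<longleftrightarrow> finite (verts G)
     \<and> (\<forall>u v. adj G u v \<longrightarrow> u \<in> verts G \<and> v \<in> verts G)
     \<and> (\<forall>u v. adj G u v \<longrightarrow> adj G v u)
     \<and> (\<forall>u. \<not> adj G u u)"

definition graph_iso :: "graph \<Rightarrow> graph \<Rightarrow> bool" where
  "graph_iso G H \<longleftrightarrow> (\<exists>f. bij_betw f (verts G) (verts H)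
     \<and> (\<forall>u\<in>verts G. \<forall>v\<in>verts G. adj G u v \<longleftrightarrow> adj H (f u) (f v)))"

definition induced_subgraph :: "graph \<Rightarrow> nat set \<Rightarrow> graph" where
  "induced_subgraph G X = (verts G \<inter> X, (\<lambda>u v. adj G u v \<and> u \<in> X \<and> v \<in> X))"

definition hereditary :: "graph set \<Rightarrow> bool" where
  "hereditary C \<longleftrightarrow> (\<forall>G\<in>C. wf_graph G)
     \<and> (\<forall>G H. G \<in> C \<longrightarrow> wf_graph H \<longrightarrow> graph_iso G H \<longrightarrow> H \<in> C)
     \<and> (\<forall>G X. G \<in> C \<longrightarrow> X \<subseteq> verts G \<longrightarrow> induced_subgraph G X \<in> C)"

definition closed_nbhd :: "graph \<Rightarrow> nat \<Rightarrow> nat set" where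
  "closed_nbhd G v = insert v {u. adj G v u}"

definition shattered :: "graph \<Rightarrow> nat set \<Rightarrow> bool" where
  "shattered G X \<longleftrightarrow> X \<subseteq> verts G
     \<and> (\<forall>S\<subseteq>X. \<exists>v\<in>verts G. closed_nbhd G v \<inter> X = S)"

definition vc_dim :: "graph \<Rightarrow> nat" where
  "vc_dim G = Max (card ` {X. shattered G X})"

definition infinite_vc_dim :: "graph set \<Rightarrow> bool" where
  "infinite_vc_dim C \<longleftrightarrow> (\<forall>k. \<exists>G\<in>C. vc_dim G \<ge> k)"

definition stable :: "graph \<Rightarrow> nat set \<Rightarrow> bool" where
  "stable G A \<longleftrightarrow> (\<forall>u\<in>A. \<forall>v\<in>A. \<not> adj G u v)"

definition clique :: "graph \<Rightarrow> nat set \<Rightarrow> bool" where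
  "clique G A \<longleftrightarrow> (\<forall>u\<in>A. \<forall>v\<in>A. u \<noteq> v \<longrightarrow> adj G u v)"

definition bipartite :: "graph \<Rightarrow> bool" where
  "bipartite G \<longleftrightarrow> (\<exists>A B. A \<union> B = verts G \<and> A \<inter> B = {} \<and> stable G A \<and> stable G B)"

definition co_bipartite :: "graph \<Rightarrow> bool" where
  "co_bipartite G \<longleftrightarrow> (\<exists>A B. A \<union> B = verts G \<and> A \<inter> B = {} \<and> clique G A \<and> clique G B)"

definition split_graph :: "graph \<Rightarrow> bool" where
  "split_graph G \<longleftrightarrow> (\<exists>A B. A \<union> B = verts G \<and> A \<inter> B = {} \<and> clique G A \<and> stable G B)"

end

theory Submission
  imports Defs "HOL-Library.Ramsey"
begin

(* A class of infinite VC-dimension contains graphs with arbitrarily large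
   shattered sets, and by Ramsey's theorem these may be taken to be cliques or stable sets.
   Such a homogeneous shattered set Z, indexed by pairs (S, i), yields for each k a vertex
   outside Z whose neighbourhood in Z consists of the indices S containing k: a "universal"
   bipartite pattern.  A second application of Ramsey's theorem makes the vertices on the
   other side homogeneous as well.  Consequently every finite bipartite pattern
   (A homogeneous, B homogeneous, arbitrary edges between them) is realized in the class with
   some pair of types (p, q); combining four counterexamples shows that one pair of types
   works for all patterns.  The types (False, False), (True, True) and the mixed ones then give
   all bipartite, all co-bipartite or all split graphs respectively. *)

definition homogeneous :: "('a \<Rightarrow> 'a \<Rightarrow> bool) \<Rightarrow> 'a set \<Rightarrow> bool \<Rightarrow> bool" where
  "homogeneous P R p \<longleftrightarrow> (\<forall>x\<in>R. \<forall>y\<in>R. x \<noteq> y \<longrightarrow> (P x y \<longleftrightarrow> p))"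

lemma stable_imp_homogeneous: "stable G A \<Longrightarrow> homogeneous (adj G) A False"
  unfolding stable_def homogeneous_def by blast

lemma clique_imp_homogeneous: "Defs.clique G A \<Longrightarrow> homogeneous (adj G) A True"
  unfolding Defs.clique_def homogeneous_def by blast

lemma homogeneous_inj_image:
  assumes "homogeneous P R p" "inj_on h S" "h ` S \<subseteq> R"
  shows "homogeneous (\<lambda>x y. P (h x) (h y)) S p"
  using assms unfolding homogeneous_def inj_on_def image_subset_iff by blast

lemma ramsey_homogeneous:
  "\<exists>r. \<forall>(V::'a set) P. finite V \<longrightarrow> r \<le> card V \<longrightarrow> symp P \<longrightarrow>
     (\<exists>R\<subseteq>V. card R = m \<and> (\<exists>p. homogeneous P R p))"
proof -
  obtain r where r: "\<And>(V::'a set) E. finite V \<Longrightarrow> r \<le> card V \<Longrightarrow>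
      \<exists>R\<subseteq>V. card R = m \<and> Ramsey.clique R E \<or> card R = m \<and> indep R E"
    using ramsey2[of m m] by blast
  have "\<exists>R\<subseteq>V. card R = m \<and> (\<exists>p. homogeneous P R p)"
    if V: "finite V" "r \<le> card V" and P: "symp P" for V :: "'a set" and P
  proof -
    define E where "E = {{x, y} | x y. P x y}"
    have edge: "{x, y} \<in> E \<longleftrightarrow> P x y" for x y
      using P unfolding E_def by (auto simp: doubleton_eq_iff symp_def)
    obtain R where R: "R \<subseteq> V" "card R = m" and "Ramsey.clique R E \<or> indep R E"
      using r[OF V] by blast
    then have "homogeneous P R (Ramsey.clique R E)"
      unfolding homogeneous_def Ramsey.clique_def indep_def edge by blast
    then show ?thesis using R by blast
  qed
  then show ?thesis by blast
qed

lemma sym_adj: "wf_graph G \<Longrightarrow> adj G u v \<longleftrightarrow> adj G v u"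
  unfolding wf_graph_def by blast

lemma hereditary_embedding:
  assumes C: "hereditary C" and G: "G \<in> C" and H: "wf_graph H"
    and inj: "inj_on h (verts H)" and sub: "h ` verts H \<subseteq> verts G"
    and adj: "\<And>u v. u \<in> verts H \<Longrightarrow> v \<in> verts H \<Longrightarrow> adj H u v \<longleftrightarrow> adj G (h u) (h v)"
  shows "H \<in> C"
proof -
  define G' where "G' = induced_subgraph G (h ` verts H)"
  have "G' \<in> C" using C G sub unfolding hereditary_def G'_def by blast
  have verts_G': "verts G' = h ` verts H"
    using sub unfolding G'_def induced_subgraph_def verts_def by auto
  have adj_G': "adj G' x y \<longleftrightarrow> adj G x y \<and> x \<in> h ` verts H \<and> y \<in> h ` verts H" for x y
    unfolding G'_def induced_subgraph_def adj_def by simp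
  define h' where "h' = inv_into (verts H) h"
  have "bij_betw h' (verts G') (verts H)"
    using bij_betw_inv_into[of h "verts H"] inj unfolding h'_def verts_G' bij_betw_def by blast
  moreover have "adj G' x y \<longleftrightarrow> adj H (h' x) (h' y)" if "x \<in> verts G'" "y \<in> verts G'" for x y
    using that adj[of "h' x" "h' y"] unfolding verts_G' adj_G' h'_def
    by (auto simp: inv_into_into f_inv_into_f)
  ultimately have "graph_iso G' H" unfolding graph_iso_def by blast
  then show ?thesis using C \<open>G' \<in> C\<close> H unfolding hereditary_def by blast
qed

definition realizes ::
    "graph set \<Rightarrow> bool \<Rightarrow> bool \<Rightarrow> 'a set \<Rightarrow> 'b set \<Rightarrow> ('a \<Rightarrow> 'b \<Rightarrow> bool) \<Rightarrow> bool" where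
  "realizes C p q A B E \<longleftrightarrow> (\<exists>G\<in>C. \<exists>f g.
     inj_on f A \<and> inj_on g B \<and> f ` A \<subseteq> verts G \<and> g ` B \<subseteq> verts G \<and> f ` A \<inter> g ` B = {}
     \<and> homogeneous (\<lambda>a a'. adj G (f a) (f a')) A p
     \<and> homogeneous (\<lambda>b b'. adj G (g b) (g b')) B q
     \<and> (\<forall>a\<in>A. \<forall>b\<in>B. adj G (f a) (g b) \<longleftrightarrow> E a b))"

lemma realizesE:
  assumes "realizes C p q A B E"
  obtains G f g where "G \<in> C" "inj_on f A" "inj_on g B"
    "f ` A \<subseteq> verts G" "g ` B \<subseteq> verts G" "f ` A \<inter> g ` B = {}"
    "homogeneous (\<lambda>a a'. adj G (f a) (f a')) A p"
    "homogeneous (\<lambda>b b'. adj G (g b) (g b')) B q"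
    "\<forall>a\<in>A. \<forall>b\<in>B. adj G (f a) (g b) \<longleftrightarrow> E a b"
  using assms unfolding realizes_def by (elim bexE exE conjE) (rule that)

lemma realizes_graph:
  assumes C: "hereditary C" and H: "wf_graph H"
    and part: "A \<union> B = verts H" "A \<inter> B = {}"
    and hom: "homogeneous (adj H) A p" "homogeneous (adj H) B q"
    and R: "realizes C p q A B (adj H)"
  shows "H \<in> C"
proof -
  obtain G f g where G: "G \<in> C" and inj: "inj_on f A" "inj_on g B"
    and sub: "f ` A \<subseteq> verts G" "g ` B \<subseteq> verts G" and disj: "f ` A \<inter> g ` B = {}"
    and homG: "homogeneous (\<lambda>a a'. adj G (f a) (f a')) A p"
      "homogeneous (\<lambda>b b'. adj G (g b) (g b')) B q"
    and cross: "\<forall>a\<in>A. \<forall>b\<in>B. adj G (f a) (g b) \<longleftrightarrow> adj H a b"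
    using R by (rule realizesE)
  have wG: "wf_graph G" using C G unfolding hereditary_def by blast
  define h where "h v = (if v \<in> A then f v else g v)" for v
  have h_A: "h v = f v" if "v \<in> A" for v using that unfolding h_def by simp
  have h_B: "h v = g v" if "v \<in> B" for v using that part(2) unfolding h_def by auto
  show ?thesis
  proof (rule hereditary_embedding[OF C G H])
    have "inj_on h A" "inj_on h B" using inj inj_on_cong[of A h f] inj_on_cong[of B h g] h_A h_B
      by auto
    moreover have "h ` A \<inter> h ` B = {}" using disj h_A h_B by auto
    ultimately show "inj_on h (verts H)" unfolding part(1)[symmetric] inj_on_Un by blast
    show "h ` verts H \<subseteq> verts G"
      using sub h_A h_B unfolding part(1)[symmetric] by (auto simp: image_subset_iff)
  next
    have irrG: "\<not> adj G x x" and irrH: "\<not> adj H x x" for x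
      using wG H unfolding wf_graph_def by blast+
    fix u v assume "u \<in> verts H" "v \<in> verts H"
    then consider "u \<in> A" "v \<in> A" | "u \<in> A" "v \<in> B" | "u \<in> B" "v \<in> A" | "u \<in> B" "v \<in> B"
      using part(1) by blast
    then show "adj H u v \<longleftrightarrow> adj G (h u) (h v)"
    proof cases
      case 1 then show ?thesis
        using hom(1) homG(1) irrG irrH h_A unfolding homogeneous_def by (cases "u = v") auto
    next
      case 2 then show ?thesis using cross h_A h_B by simp
    next
      case 3 then show ?thesis using cross h_A h_B sym_adj[OF wG] sym_adj[OF H] by simp
    next
      case 4 then show ?thesis
        using hom(2) homG(2) irrG irrH h_B unfolding homogeneous_def by (cases "u = v") auto
    qed
  qed
qed

lemma realizes_restrict:
  assumes R: "realizes C p q A' B' E'"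
    and h1: "inj_on h1 A" "h1 ` A \<subseteq> A'" and h2: "inj_on h2 B" "h2 ` B \<subseteq> B'"
    and E: "\<And>a b. a \<in> A \<Longrightarrow> b \<in> B \<Longrightarrow> E' (h1 a) (h2 b) \<longleftrightarrow> E a b"
  shows "realizes C p q A B E"
proof -
  obtain G f g where G: "G \<in> C" and inj: "inj_on f A'" "inj_on g B'"
    and sub: "f ` A' \<subseteq> verts G" "g ` B' \<subseteq> verts G" and disj: "f ` A' \<inter> g ` B' = {}"
    and homG: "homogeneous (\<lambda>a a'. adj G (f a) (f a')) A' p"
      "homogeneous (\<lambda>b b'. adj G (g b) (g b')) B' q"
    and cross: "\<forall>a\<in>A'. \<forall>b\<in>B'. adj G (f a) (g b) \<longleftrightarrow> E' a b"
    using R by (rule realizesE)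
  have "inj_on (f \<circ> h1) A" "inj_on (g \<circ> h2) B"
    using comp_inj_on[OF h1(1) inj_on_subset[OF inj(1) h1(2)]]
      comp_inj_on[OF h2(1) inj_on_subset[OF inj(2) h2(2)]] by auto
  moreover have "(f \<circ> h1) ` A \<subseteq> verts G" "(g \<circ> h2) ` B \<subseteq> verts G"
    "(f \<circ> h1) ` A \<inter> (g \<circ> h2) ` B = {}"
    using sub disj h1(2) h2(2) by (auto simp: image_subset_iff) blast
  moreover have "homogeneous (\<lambda>a a'. adj G ((f \<circ> h1) a) ((f \<circ> h1) a')) A p"
    using homogeneous_inj_image[OF homG(1) h1] by simp
  moreover have "homogeneous (\<lambda>b b'. adj G ((g \<circ> h2) b) ((g \<circ> h2) b')) B q"
    using homogeneous_inj_image[OF homG(2) h2] by simp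
  moreover have "\<forall>a\<in>A. \<forall>b\<in>B. adj G ((f \<circ> h1) a) ((g \<circ> h2) b) \<longleftrightarrow> E a b"
    using cross E h1(2) h2(2) by (simp add: image_subset_iff)
  ultimately show ?thesis unfolding realizes_def using G by blast
qed

lemma shattered_subset:
  assumes X: "shattered G X" and YX: "Y \<subseteq> X"
  shows "shattered G Y"
  unfolding shattered_def
proof (intro conjI allI impI)
  show "Y \<subseteq> verts G" using X YX unfolding shattered_def by blast
  fix S assume "S \<subseteq> Y"
  then obtain v where "v \<in> verts G" "closed_nbhd G v \<inter> X = S"
    using X YX unfolding shattered_def by (meson order_trans)
  then show "\<exists>v\<in>verts G. closed_nbhd G v \<inter> Y = S" using \<open>S \<subseteq> Y\<close> YX by blast
qed

(* Infinite VC-dimension yields arbitrarily large shattered sets.  The maximum of the empty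
   set is some unspecified number; exceeding it rules out graphs without shattered sets. *)
lemma large_shattered:
  assumes C: "hereditary C" and V: "infinite_vc_dim C"
  obtains G X where "G \<in> C" "shattered G X" "r \<le> card X"
proof -
  obtain G where G: "G \<in> C" and vc: "max r (Suc (Max {})) \<le> vc_dim G"
    using V unfolding infinite_vc_dim_def by blast
  define S where "S = {X. shattered G X}"
  have "finite S"
  proof (rule finite_subset)
    show "S \<subseteq> Pow (verts G)" unfolding S_def shattered_def by auto
    show "finite (Pow (verts G))" using C G unfolding hereditary_def wf_graph_def by simp
  qed
  moreover have "S \<noteq> {}" using vc unfolding vc_dim_def S_def[symmetric] by auto
  ultimately have "vc_dim G \<in> card ` S" unfolding vc_dim_def S_def[symmetric] by simp
  then obtain X where "shattered G X" "card X = vc_dim G" unfolding S_def by auto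
  then show ?thesis using that G vc by simp
qed

lemma homogeneous_shattered:
  assumes C: "hereditary C" and V: "infinite_vc_dim C"
  obtains G Z p where "G \<in> C" "shattered G Z" "card Z = n" "homogeneous (adj G) Z p"
proof -
  obtain r where r: "\<And>(X::nat set) P. finite X \<Longrightarrow> r \<le> card X \<Longrightarrow> symp P \<Longrightarrow>
      \<exists>Z\<subseteq>X. card Z = n \<and> (\<exists>p. homogeneous P Z p)"
    using ramsey_homogeneous by blast
  obtain G X where G: "G \<in> C" and X: "shattered G X" "r \<le> card X"
    using large_shattered[OF C V] by blast
  have wG: "wf_graph G" using C G unfolding hereditary_def by blast
  then have "finite X" "symp (adj G)"
    using X(1) finite_subset unfolding shattered_def wf_graph_def symp_def by blast+
  then obtain Z p where "Z \<subseteq> X" "card Z = n" "homogeneous (adj G) Z p"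
    using r X(2) by blast
  then show ?thesis using that G shattered_subset[OF X(1)] by blast
qed

lemma homogeneous_trace:
  assumes "homogeneous (adj G) Z p" "z \<in> Z"
  shows "closed_nbhd G z \<inter> Z = (if p then Z else {z})"
  using assms unfolding homogeneous_def closed_nbhd_def by auto

lemma shattered_witness_outside:
  assumes sh: "shattered G Z" and hom: "homogeneous (adj G) Z p"
    and S: "S \<subseteq> Z" "S \<noteq> Z" "x \<in> S" "y \<in> S" "x \<noteq> y"
  obtains v where "v \<in> verts G" "v \<notin> Z" "closed_nbhd G v \<inter> Z = S"
proof -
  obtain v where v: "v \<in> verts G" "closed_nbhd G v \<inter> Z = S"
    using sh S(1) unfolding shattered_def by blast
  have "v \<notin> Z"
  proof
    assume "v \<in> Z"
    then have "S = (if p then Z else {v})" using homogeneous_trace[OF hom] v(2) by simp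
    then show False using S by (auto split: if_splits)
  qed
  then show ?thesis using that v by blast
qed

(* Index a homogeneous shattered set Z by the pairs (S, i) with
   S a subset of {..<M} and i < N.  For every k < M, the elements whose index contains k are
   traced by a vertex w k outside Z; this realizes, between Z and the w k, the universal
   bipartite relation "k is contained in S", with all subsets available in N copies. *)
lemma shattered_universal_pattern:
  fixes M N :: nat
  assumes G: "wf_graph G" and sh: "shattered G Z" and hom: "homogeneous (adj G) Z p"
    and N: "2 \<le> N" and card: "card Z = card (Pow {..<M} \<times> {..<N})"
  obtains \<phi> w where "bij_betw \<phi> (Pow {..<M} \<times> {..<N}) Z"
    "inj_on w {..<M}" "w ` {..<M} \<subseteq> verts G - Z"
    "\<And>x k. x \<in> Pow {..<M} \<times> {..<N} \<Longrightarrow> k < M \<Longrightarrow> adj G (\<phi> x) (w k) \<longleftrightarrow> k \<in> fst x"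
proof -
  define I where "I = Pow {..<M} \<times> {..<N}"
  have I_empty: "({}, 0) \<in> I" using N unfolding I_def by auto
  have I_single: "({k}, 0) \<in> I" "({k}, 1) \<in> I" if "k < M" for k
    using N that unfolding I_def by auto
  have "finite I" unfolding I_def by simp
  then have "0 < card Z" using card I_empty unfolding I_def[symmetric] by (auto simp: card_gt_0_iff)
  then obtain \<phi> where \<phi>: "bij_betw \<phi> I Z"
    using finite_same_card_bij[OF \<open>finite I\<close>] card unfolding I_def[symmetric]
    by (metis card_gt_0_iff)
  define F where "F k = \<phi> ` {x\<in>I. k \<in> fst x}" for k
  have in_F: "\<phi> x \<in> F k \<longleftrightarrow> k \<in> fst x" if "x \<in> I" for x k
    using that \<phi> unfolding F_def bij_betw_def inj_on_def by auto
  have F_Z: "F k \<subseteq> Z" for k using \<phi> unfolding F_def bij_betw_def by auto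
  \<comment> \<open>Each F k has two elements and misses a point of Z, so it is not the trace of a
      vertex of the homogeneous set Z; its witness therefore lies outside Z.\<close>
  have "\<exists>v. v \<in> verts G \<and> v \<notin> Z \<and> closed_nbhd G v \<inter> Z = F k" if "k < M" for k
  proof -
    have "\<phi> ({}, 0) \<notin> F k" "\<phi> ({}, 0) \<in> Z"
      using in_F[OF I_empty] \<phi> I_empty unfolding bij_betw_def by auto
    then have "F k \<noteq> Z" by blast
    moreover have "\<phi> ({k}, 0) \<in> F k" "\<phi> ({k}, 1) \<in> F k" "\<phi> ({k}, 0) \<noteq> \<phi> ({k}, 1)"
      using in_F I_single[OF that] \<phi> unfolding bij_betw_def inj_on_def by auto
    ultimately show ?thesis using shattered_witness_outside[OF sh hom F_Z] by metis
  qed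
  then obtain w where w_verts: "\<And>k. k < M \<Longrightarrow> w k \<in> verts G"
    and w_out: "\<And>k. k < M \<Longrightarrow> w k \<notin> Z"
    and w_trace: "\<And>k. k < M \<Longrightarrow> closed_nbhd G (w k) \<inter> Z = F k"
    by metis
  have w_outside: "w ` {..<M} \<subseteq> verts G - Z" using w_verts w_out by auto
  have w_inj: "inj_on w {..<M}"
  proof (rule inj_onI)
    fix k k' assume k: "k \<in> {..<M}" and k': "k' \<in> {..<M}" and "w k = w k'"
    then have "F k = F k'" using w_trace[of k] w_trace[of k'] by simp
    have k_I: "({k}, 0) \<in> I" using I_single(1) k by simp
    have "\<phi> ({k}, 0) \<in> F k" using in_F[OF k_I, of k] by simp
    then have "\<phi> ({k}, 0) \<in> F k'" using \<open>F k = F k'\<close> by simp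
    then show "k = k'" using in_F[OF k_I, of k'] by (metis fst_conv singletonD)
  qed
  have pattern: "adj G (\<phi> x) (w k) \<longleftrightarrow> k \<in> fst x" if x: "x \<in> I" and k: "k < M" for x k
  proof -
    have "\<phi> x \<in> Z" using bij_betw_apply[OF \<phi> x] .
    then have "\<phi> x \<noteq> w k" using w_out[OF k] by metis
    then have "adj G (\<phi> x) (w k) \<longleftrightarrow> \<phi> x \<in> closed_nbhd G (w k)"
      using sym_adj[OF G, of "\<phi> x" "w k"] unfolding closed_nbhd_def by simp
    also have "\<dots> \<longleftrightarrow> \<phi> x \<in> F k" using w_trace[OF k] \<open>\<phi> x \<in> Z\<close> by (metis Int_iff)
    also have "\<dots> \<longleftrightarrow> k \<in> fst x" using in_F[OF x] .
    finally show ?thesis .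
  qed
  show ?thesis by (rule that[OF \<phi>[unfolded I_def] w_inj w_outside pattern[unfolded I_def]])
qed

(* Among the vertices w k of the
   universal pattern, Ramsey's theorem selects a homogeneous set K of size card B; a vertex of A
   is then represented by the index whose set is the image of its neighbourhood in B, and whose
   copy number separates vertices of A with equal neighbourhoods. *)
lemma realizes_some_type:
  assumes C: "hereditary C" and V: "infinite_vc_dim C" and A: "finite A" and B: "finite B"
  shows "\<exists>p q. realizes C p q A B E"
proof -
  obtain M where M: "\<And>(K::nat set) P. finite K \<Longrightarrow> M \<le> card K \<Longrightarrow> symp P \<Longrightarrow>
      \<exists>R\<subseteq>K. card R = card B \<and> (\<exists>q. homogeneous P R q)"
    using ramsey_homogeneous by blast
  define I where "I = Pow {..<M} \<times> {..<card A + 2}"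
  obtain G Z p where G: "G \<in> C" and Z: "shattered G Z" "card Z = card I" "homogeneous (adj G) Z p"
    using homogeneous_shattered[OF C V] by metis
  have wG: "wf_graph G" using C G unfolding hereditary_def by blast
  obtain \<phi> w where \<phi>: "bij_betw \<phi> I Z" and w: "inj_on w {..<M}" "w ` {..<M} \<subseteq> verts G - Z"
    and cross: "\<And>x k. x \<in> I \<Longrightarrow> k < M \<Longrightarrow> adj G (\<phi> x) (w k) \<longleftrightarrow> k \<in> fst x"
    using shattered_universal_pattern[OF wG Z(1) Z(3), of "card A + 2" M] Z(2)
    unfolding I_def by auto
  obtain K q where K: "K \<subseteq> {..<M}" "card K = card B"
    and hom_K: "homogeneous (\<lambda>k k'. adj G (w k) (w k')) K q"
    using M[of "{..<M}" "\<lambda>k k'. adj G (w k) (w k')"] sym_adj[OF wG] unfolding symp_def by auto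
  have univ: "realizes C p q I K (\<lambda>x k. k \<in> fst x)"
    unfolding realizes_def
  proof (intro bexI[OF _ G] exI conjI)
    show "inj_on \<phi> I" "\<phi> ` I \<subseteq> verts G" using \<phi> Z(1) unfolding bij_betw_def shattered_def by auto
    show "inj_on w K" "w ` K \<subseteq> verts G" using w K(1) inj_on_subset by auto
    show "\<phi> ` I \<inter> w ` K = {}" using \<phi> w(2) K(1) unfolding bij_betw_def by auto
    show "homogeneous (\<lambda>x y. adj G (\<phi> x) (\<phi> y)) I p"
      using homogeneous_inj_image[OF Z(3)] \<phi> unfolding bij_betw_def by auto
    show "homogeneous (\<lambda>k k'. adj G (w k) (w k')) K q" by (rule hom_K)
    show "\<forall>x\<in>I. \<forall>k\<in>K. adj G (\<phi> x) (w k) \<longleftrightarrow> k \<in> fst x" using cross K(1) by auto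
  qed
  obtain \<sigma> where \<sigma>: "bij_betw \<sigma> B K"
    using finite_same_card_bij[OF B finite_subset[OF K(1)]] K(2) by auto
  obtain \<iota> where \<iota>: "bij_betw \<iota> A {0..<card A}" using ex_bij_betw_finite_nat[OF A] by blast
  have "realizes C p q A B E"
  proof (rule realizes_restrict[OF univ])
    show "inj_on (\<lambda>a. (\<sigma> ` {b\<in>B. E a b}, \<iota> a)) A"
      using \<iota> unfolding bij_betw_def inj_on_def by auto
    have "\<sigma> ` {b\<in>B. E a b} \<subseteq> {..<M}" "\<iota> a < card A + 2" if "a \<in> A" for a
      using \<sigma> bij_betw_apply[OF \<iota> that] K(1) unfolding bij_betw_def by auto
    then show "(\<lambda>a. (\<sigma> ` {b\<in>B. E a b}, \<iota> a)) ` A \<subseteq> I" unfolding I_def by auto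
    show "inj_on \<sigma> B" "\<sigma> ` B \<subseteq> K" using \<sigma> unfolding bij_betw_def by auto
    show "\<sigma> b \<in> fst (\<sigma> ` {b\<in>B. E a b}, \<iota> a) \<longleftrightarrow> E a b" if "a \<in> A" "b \<in> B" for a b
      using \<sigma> that unfolding bij_betw_def inj_on_def by auto
  qed
  then show ?thesis by blast
qed

definition tag :: "bool \<Rightarrow> bool \<Rightarrow> nat \<Rightarrow> nat" where
  "tag p q a = 4 * a + (if p then 2 else 0) + (if q then 1 else 0)"

lemma tag_inj: "tag p q a = tag p' q' a' \<Longrightarrow> p = p' \<and> q = q' \<and> a = a'"
  unfolding tag_def by (cases p; cases q; cases p'; cases q'; simp; arith)

(* One pair of types realizes all finite patterns: otherwise the disjoint union of a
   counterexample for each of the four pairs of types would be a pattern that cannot be realized. *)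
lemma uniform_type:
  assumes C: "hereditary C" and V: "infinite_vc_dim C"
  shows "\<exists>p q. \<forall>(A::nat set) (B::nat set) E. finite A \<longrightarrow> finite B \<longrightarrow> realizes C p q A B E"
proof (rule ccontr)
  assume "\<not> ?thesis"
  then obtain PA PB :: "bool \<Rightarrow> bool \<Rightarrow> nat set" and PE where
    P: "\<And>p q. finite (PA p q)" "\<And>p q. finite (PB p q)"
       "\<And>p q. \<not> realizes C p q (PA p q) (PB p q) (PE p q)"
    by metis
  define A' where "A' = (\<Union>p. \<Union>q. tag p q ` PA p q)"
  define B' where "B' = (\<Union>p. \<Union>q. tag p q ` PB p q)"
  define E' where "E' x y \<longleftrightarrow> (\<exists>p q a b. x = tag p q a \<and> y = tag p q b \<and> PE p q a b)" for x y
  have "finite A'" "finite B'" unfolding A'_def B'_def using P(1,2) by simp_all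
  then obtain p q where R: "realizes C p q A' B' E'"
    using realizes_some_type[OF C V] by blast
  have "realizes C p q (PA p q) (PB p q) (PE p q)"
  proof (rule realizes_restrict[OF R])
    show "inj_on (tag p q) (PA p q)" "inj_on (tag p q) (PB p q)"
      by (meson tag_inj inj_onI)+
    show "tag p q ` PA p q \<subseteq> A'" "tag p q ` PB p q \<subseteq> B'"
      unfolding A'_def B'_def by blast+
    show "E' (tag p q a) (tag p q b) \<longleftrightarrow> PE p q a b" for a b
    proof
      assume "E' (tag p q a) (tag p q b)"
      then obtain p' q' a' b' where tags: "tag p q a = tag p' q' a'" "tag p q b = tag p' q' b'"
        and "PE p' q' a' b'" unfolding E'_def by blast
      then show "PE p q a b" using tag_inj[OF tags(1)] tag_inj[OF tags(2)] by simp
    qed (auto simp: E'_def)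
  qed
  then show False using P(3) by blast
qed

definition homogeneous_partition :: "graph \<Rightarrow> bool \<Rightarrow> bool \<Rightarrow> bool" where
  "homogeneous_partition H p q \<longleftrightarrow> (\<exists>A B. A \<union> B = verts H \<and> A \<inter> B = {}
     \<and> homogeneous (adj H) A p \<and> homogeneous (adj H) B q)"

lemma bipartite_partition: "bipartite H \<Longrightarrow> homogeneous_partition H False False"
  unfolding bipartite_def homogeneous_partition_def using stable_imp_homogeneous by blast

lemma co_bipartite_partition: "co_bipartite H \<Longrightarrow> homogeneous_partition H True True"
  unfolding co_bipartite_def homogeneous_partition_def using clique_imp_homogeneous by blast

lemma split_partition:
  assumes "split_graph H"
  shows "homogeneous_partition H True False" "homogeneous_partition H False True"
proof -
  obtain A B where part: "A \<union> B = verts H" "A \<inter> B = {}" and "Defs.clique H A" "stable H B"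
    using assms unfolding split_graph_def by blast
  then have hom: "homogeneous (adj H) A True" "homogeneous (adj H) B False"
    using clique_imp_homogeneous stable_imp_homogeneous by blast+
  have part': "B \<union> A = verts H" "B \<inter> A = {}" using part by auto
  show "homogeneous_partition H True False" "homogeneous_partition H False True"
    unfolding homogeneous_partition_def using part part' hom by blast+
qed

lemma partition_in_class:
  assumes C: "hereditary C"
    and U: "\<forall>(A::nat set) (B::nat set) E. finite A \<longrightarrow> finite B \<longrightarrow> realizes C p q A B E"
    and H: "wf_graph H" "homogeneous_partition H p q"
  shows "H \<in> C"
proof -
  obtain A B where part: "A \<union> B = verts H" "A \<inter> B = {}"
    and hom: "homogeneous (adj H) A p" "homogeneous (adj H) B q"
    using H(2) unfolding homogeneous_partition_def by blast
  have "finite A" "finite B" using H(1) part(1) unfolding wf_graph_def by (metis finite_Un)+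
  then show ?thesis using realizes_graph[OF C H(1) part hom] U by blast
qed

theorem mainTheorem4:
  assumes "hereditary C" and "infinite_vc_dim C"
  shows "(\<forall>G. wf_graph G \<and> bipartite G \<longrightarrow> G \<in> C)
       \<or> (\<forall>G. wf_graph G \<and> co_bipartite G \<longrightarrow> G \<in> C)
       \<or> (\<forall>G. wf_graph G \<and> split_graph G \<longrightarrow> G \<in> C)"
proof -
  obtain p q where "\<forall>(A::nat set) (B::nat set) E. finite A \<longrightarrow> finite B \<longrightarrow> realizes C p q A B E"
    using uniform_type[OF assms] by blast
  then have member: "\<And>H. wf_graph H \<Longrightarrow> homogeneous_partition H p q \<Longrightarrow> H \<in> C"
    using partition_in_class[OF assms(1)] by blast
  show ?thesis
  proof (cases p; cases q)
    assume "\<not> p" "\<not> q"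
    then show ?thesis using member bipartite_partition by simp
  next
    assume "p" "q"
    then show ?thesis using member co_bipartite_partition by simp
  next
    assume "p" "\<not> q"
    then show ?thesis using member split_partition(1) by simp
  next
    assume "\<not> p" "q"
    then show ?thesis using member split_partition(2) by simp
  qed
qed

end
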